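(* Let $L\in\{0,1\}$, $X$, $T^{k-1}$ and $T_k$ be jointly distributed discrete random variables with finite supports such that, for every value $t^{k-1}$ of $T^{k-1}$ with positive probability, conditioned on $T^{k-1}=t^{k-1}$ and $L=0$ the message $T_k$ is independent of $X$. Assume $\Pr(L=0\mid X=x,T^{k-1}=t^{k-1})>0$ whenever $\Pr(X=x,T^{k-1}=t^{k-1})>0$. Writing $T^k=(T^{k-1},T_k)$, \[ I(X;T_k\mid T^{k-1})\le \mathrm{susp}(X,T^k)-\mathrm{susp}(X,T^{k-1}). \]
   Context: All logarithms are base $2$. For a random variable $Y$ (possibly a tuple of random variables) jointly distributed with $L\in\{0,1\}$ and a value $y$ with $\Pr(Y=y)>0$, the suspicion given $Y=y$ is $\mathrm{susp}(Y=y)=-\log\Pr(L=0\mid Y=y)\in[0,\infty]$, and the suspicion given $Y$ is $\mathrm{susp}(Y)=\sum_{y}\Pr(Y=y)\,\mathrm{susp}(Y=y)$. Here $T^{k-1}$ plays the role of a previous transcript and $T_k$ of the next message, sent by a player whose leaking indicator is $L$. $I(X;T_k\mid T^{k-1})$ is conditional mutual information. *)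

theory Defs
  imports "HOL-Probability.Probability"
begin

text \<open>Discrete random variables are functions on the sample space of a pmf M.\<close>

definition prb :: "'w pmf \<Rightarrow> ('w \<Rightarrow> bool) \<Rightarrow> real" where
  "prb M P = measure_pmf.prob M {w. P w}"

text \<open>Conditional probability Pr(P | Q) (= 0 if Pr(Q) = 0, never used in that case).\<close>
definition cprb :: "'w pmf \<Rightarrow> ('w \<Rightarrow> bool) \<Rightarrow> ('w \<Rightarrow> bool) \<Rightarrow> real" where
  "cprb M P Q = prb M (\<lambda>w. P w \<and> Q w) / prb M Q"

definition susp_at :: "'w pmf \<Rightarrow> ('w \<Rightarrow> nat) \<Rightarrow> ('w \<Rightarrow> 'y) \<Rightarrow> 'y \<Rightarrow> ereal" where
  "susp_at M L Y y =
     (let q = cprb M (\<lambda>w. L w = 0) (\<lambda>w. Y w = y)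
      in if q = 0 then \<infinity> else ereal (- log 2 q))"

definition susp :: "'w pmf \<Rightarrow> ('w \<Rightarrow> nat) \<Rightarrow> ('w \<Rightarrow> 'y) \<Rightarrow> ereal" where
  "susp M L Y = (\<Sum>y \<in> Y ` set_pmf M. ereal (prb M (\<lambda>w. Y w = y)) * susp_at M L Y y)"

definition cond_mi :: "'w pmf \<Rightarrow> ('w \<Rightarrow> 'a) \<Rightarrow> ('w \<Rightarrow> 'b) \<Rightarrow> ('w \<Rightarrow> 'c) \<Rightarrow> real" where
  "cond_mi M X Y Z =
     (\<Sum>(x, y, z) \<in> (\<lambda>w. (X w, Y w, Z w)) ` set_pmf M.
        prb M (\<lambda>w. X w = x \<and> Y w = y \<and> Z w = z) *
        log 2 ((prb M (\<lambda>w. X w = x \<and> Y w = y \<and> Z w = z) * prb M (\<lambda>w. Z w = z)) /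
               (prb M (\<lambda>w. X w = x \<and> Z w = z) * prb M (\<lambda>w. Y w = y \<and> Z w = z))))"

end

theory Submission
  imports Defs
begin

text \<open>
  For an outcome w with values x = X w, t = T w, m = Tk w write
  p(.) for the probabilities of atoms and q(.) for the probabilities of the
  same atoms intersected with {L = 0}. The mutual information I(X; Tk | T) and
  both suspicions are expectations of pointwise quantities (finite sums over
  the values of the random variables), and pointwise
    log2 (p(x,m,t) p(t) / (p(x,t) p(m,t)))
      = susp(X,T,Tk at w) - susp(X,T at w) + log2 (q(t,m)/p(t,m) / (q(t)/p(t))),
  because the conditional independence of X and Tk given T and L = 0 is the
  product rule q(x,t,m) q(t) = q(x,t) q(t,m). The last ratio r has E[r] = 1 by
  the tower property, so E[log2 r] <= 0 by Gibbs' inequality. If some value of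
  (X,T,Tk) makes leaking certain, its suspicion is infinite and the claim is
  trivial.
\<close>

lemma prb_pos: "w \<in> set_pmf M \<Longrightarrow> P w \<Longrightarrow> prb M P > 0"
  unfolding prb_def by (rule measure_pmf_posI) auto

lemma prb_mono: "(\<And>w. P w \<Longrightarrow> Q w) \<Longrightarrow> prb M P \<le> prb M Q"
  unfolding prb_def by (rule measure_pmf.finite_measure_mono) auto

lemma prb_nonneg: "prb M P \<ge> 0"
  unfolding prb_def by simp

lemma cprb_nonneg: "cprb M P Q \<ge> 0"
  unfolding cprb_def by (simp add: prb_nonneg)

lemma cprb_le1: "cprb M P Q \<le> 1"
proof -
  have "prb M (\<lambda>w. P w \<and> Q w) \<le> prb M Q" by (rule prb_mono) auto
  then show ?thesis unfolding cprb_def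
    using prb_nonneg[of M Q] by (cases "prb M Q = 0") (auto simp: divide_le_eq_1)
qed

lemma finite_range_pair:
  "finite (X ` S) \<Longrightarrow> finite (Y ` S) \<Longrightarrow> finite ((\<lambda>w. (X w, Y w)) ` S)"
  by (rule finite_subset[of _ "X ` S \<times> Y ` S"]) auto

lemma expectation_finite_range:
  assumes "finite (Y ` set_pmf M)"
  shows "(\<integral>w. g (Y w) \<partial>measure_pmf M) = (\<Sum>y\<in>Y ` set_pmf M. prb M (\<lambda>w. Y w = y) * g y)"
proof -
  have "(\<integral>w. g (Y w) \<partial>measure_pmf M) = (\<integral>y. g y \<partial>measure_pmf (map_pmf Y M))"
    by simp
  also have "\<dots> = (\<Sum>y\<in>Y ` set_pmf M. g y * pmf (map_pmf Y M) y)"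
    by (rule integral_measure_pmf_real) (auto simp: assms)
  also have "\<dots> = (\<Sum>y\<in>Y ` set_pmf M. prb M (\<lambda>w. Y w = y) * g y)"
    by (simp add: pmf_map prb_def vimage_def mult.commute)
  finally show ?thesis .
qed

lemma integrable_finite_range:
  assumes "finite (Y ` set_pmf M)"
  shows "integrable (measure_pmf M) (\<lambda>w. g (Y w) :: real)"
proof -
  have "integrable (measure_pmf (map_pmf Y M)) g"
    by (rule integrable_measure_pmf_finite) (simp add: assms)
  then show ?thesis by simp
qed

lemma integrable_factoring:
  assumes fin: "finite (Y ` set_pmf M)" and factors: "\<And>v w. Y v = Y w \<Longrightarrow> f v = f w"
  shows "integrable (measure_pmf M) (f :: 'w \<Rightarrow> real)"
proof -
  have "f w = f (SOME v. Y v = Y w)" for w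
    by (rule factors, rule someI_ex[where P="\<lambda>v. Y v = Y w", symmetric]) auto
  then have f_eq: "f = (\<lambda>w. f (SOME v. Y v = Y w))" by (rule ext)
  show ?thesis
    by (subst f_eq) (rule integrable_finite_range[OF fin, of "\<lambda>y. f (SOME v. Y v = y)"])
qed

lemma expectation_restricted:
  assumes fin: "finite (Y ` set_pmf M)"
  shows "(\<integral>w. (if A w then g (Y w) else 0) \<partial>measure_pmf M)
       = (\<Sum>y\<in>Y ` set_pmf M. prb M (\<lambda>w. A w \<and> Y w = y) * g y)"
proof -
  let ?AY = "\<lambda>w. (A w, Y w)"
  let ?h = "\<lambda>(b, y). if b then g y else 0"
  have "(\<integral>w. (if A w then g (Y w) else 0) \<partial>measure_pmf M) = (\<integral>z. ?h z \<partial>measure_pmf (map_pmf ?AY M))"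
    by simp
  also have "\<dots> = (\<Sum>z\<in>Pair True ` Y ` set_pmf M. ?h z * pmf (map_pmf ?AY M) z)"
    by (rule integral_measure_pmf_real) (auto simp: fin split: if_splits)
  also have "\<dots> = (\<Sum>y\<in>Y ` set_pmf M. prb M (\<lambda>w. A w \<and> Y w = y) * g y)"
    by (subst sum.reindex) (auto intro: inj_onI simp: pmf_map prb_def vimage_def mult.commute)
  finally show ?thesis .
qed

lemma expectation_cprb_tower:
  assumes fin: "finite (Y ` set_pmf M)"
  shows "(\<integral>w. cprb M A (\<lambda>v. Y v = Y w) * g (Y w) \<partial>measure_pmf M)
       = (\<integral>w. (if A w then g (Y w) else 0) \<partial>measure_pmf M)"
proof -
  have "prb M (\<lambda>w. Y w = y) * (cprb M A (\<lambda>v. Y v = y) * g y) = prb M (\<lambda>w. A w \<and> Y w = y) * g y"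
    if "y \<in> Y ` set_pmf M" for y
  proof -
    from that have "prb M (\<lambda>w. Y w = y) > 0" by (auto intro: prb_pos)
    then show ?thesis by (simp add: cprb_def)
  qed
  then have "(\<Sum>y\<in>Y ` set_pmf M. prb M (\<lambda>w. Y w = y) * (cprb M A (\<lambda>v. Y v = y) * g y))
           = (\<Sum>y\<in>Y ` set_pmf M. prb M (\<lambda>w. A w \<and> Y w = y) * g y)"
    by (rule sum.cong[OF refl])
  then show ?thesis
    by (simp only: expectation_finite_range[OF fin, where g="\<lambda>y. cprb M A (\<lambda>v. Y v = y) * g y"]
                   expectation_restricted[OF fin])
qed

text \<open>Gibbs' inequality in the form used here: since log2 z <= (z - 1) / ln 2, a
  positive random variable r satisfies E[log2 r] <= (E[r] - 1) / ln 2.\<close>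

lemma expectation_log_le:
  fixes r :: "'w \<Rightarrow> real"
  assumes "integrable (measure_pmf M) r" "integrable (measure_pmf M) (\<lambda>w. log 2 (r w))"
    and "\<And>w. w \<in> set_pmf M \<Longrightarrow> r w > 0"
  shows "(\<integral>w. log 2 (r w) \<partial>measure_pmf M) \<le> ((\<integral>w. r w \<partial>measure_pmf M) - 1) / ln 2"
proof -
  have "(\<integral>w. log 2 (r w) \<partial>measure_pmf M) \<le> (\<integral>w. (r w - 1) / ln 2 \<partial>measure_pmf M)"
  proof (rule integral_mono_AE)
    show "AE w in measure_pmf M. log 2 (r w) \<le> (r w - 1) / ln 2"
      using assms(3) by (auto intro!: AE_pmfI divide_right_mono ln_le_minus_one simp: log_def)
  qed (use assms(1,2) in auto)
  also have "\<dots> = ((\<integral>w. r w \<partial>measure_pmf M) - 1) / ln 2"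
    using assms(1) by simp
  finally show ?thesis .
qed

definition atom_prb :: "'w pmf \<Rightarrow> ('w \<Rightarrow> 'y) \<Rightarrow> 'w \<Rightarrow> real" where
  "atom_prb M Y w = prb M (\<lambda>v. Y v = Y w)"

text \<open>The probability Pr(L = 0 | Y = Y w) that the player does not leak, given the
  observed value of Y at the outcome w; susp(Y = Y w) is its negated logarithm.\<close>

definition safe_prb :: "'w pmf \<Rightarrow> ('w \<Rightarrow> nat) \<Rightarrow> ('w \<Rightarrow> 'y) \<Rightarrow> 'w \<Rightarrow> real" where
  "safe_prb M L Y w = cprb M (\<lambda>v. L v = 0) (\<lambda>v. Y v = Y w)"

lemma safe_prb_eq: "safe_prb M L Y w = prb M (\<lambda>v. L v = 0 \<and> Y v = Y w) / atom_prb M Y w"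
  by (simp add: safe_prb_def cprb_def atom_prb_def)

lemma atom_prb_pos: "w \<in> set_pmf M \<Longrightarrow> atom_prb M Y w > 0"
  unfolding atom_prb_def by (rule prb_pos) auto

lemma safe_prb_pos_coarsen:
  assumes w: "w \<in> set_pmf M"
    and coarser: "\<And>v. Y v = Y w \<Longrightarrow> Z v = Z w"
    and pos: "safe_prb M L Y w > 0"
  shows "safe_prb M L Z w > 0"
proof -
  have "0 < prb M (\<lambda>v. L v = 0 \<and> Y v = Y w)"
    using pos atom_prb_pos[OF w, of Y] by (auto simp: safe_prb_eq zero_less_divide_iff)
  also have "\<dots> \<le> prb M (\<lambda>v. L v = 0 \<and> Z v = Z w)"
    by (rule prb_mono) (auto dest: coarser)
  finally have "0 < prb M (\<lambda>v. L v = 0 \<and> Z v = Z w)" .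
  with atom_prb_pos[OF w, of Z] show ?thesis by (simp add: safe_prb_eq)
qed

lemma cond_mi_as_expectation:
  assumes "finite (X ` set_pmf M)" "finite (Y ` set_pmf M)" "finite (Z ` set_pmf M)"
  shows "cond_mi M X Y Z = (\<integral>w. log 2
     (atom_prb M (\<lambda>v. (X v, Y v, Z v)) w * atom_prb M Z w /
      (atom_prb M (\<lambda>v. (X v, Z v)) w * atom_prb M (\<lambda>v. (Y v, Z v)) w)) \<partial>measure_pmf M)"
proof -
  let ?XYZ = "\<lambda>w. (X w, Y w, Z w)"
  define g where "g = (\<lambda>(x, y, z). log 2
     ((prb M (\<lambda>w. X w = x \<and> Y w = y \<and> Z w = z) * prb M (\<lambda>w. Z w = z)) /
      (prb M (\<lambda>w. X w = x \<and> Z w = z) * prb M (\<lambda>w. Y w = y \<and> Z w = z))))"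
  have fin: "finite (?XYZ ` set_pmf M)"
    using assms by (intro finite_range_pair) auto
  have "cond_mi M X Y Z = (\<integral>w. g (?XYZ w) \<partial>measure_pmf M)"
    unfolding expectation_finite_range[OF fin] cond_mi_def
    by (rule sum.cong[OF refl]) (auto simp: g_def)
  also have "\<dots> = (\<integral>w. log 2
     (atom_prb M ?XYZ w * atom_prb M Z w /
      (atom_prb M (\<lambda>v. (X v, Z v)) w * atom_prb M (\<lambda>v. (Y v, Z v)) w)) \<partial>measure_pmf M)"
    by (simp add: g_def atom_prb_def)
  finally show ?thesis .
qed

lemma susp_at_nonneg: "susp_at M L Y y \<ge> 0"
proof -
  define q where "q = cprb M (\<lambda>w. L w = 0) (\<lambda>w. Y w = y)"
  have "0 \<le> q" "q \<le> 1" unfolding q_def by (rule cprb_nonneg, rule cprb_le1)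
  then show ?thesis
    unfolding susp_at_def q_def[symmetric] Let_def by auto
qed

lemma susp_as_expectation:
  assumes fin: "finite (Y ` set_pmf M)"
    and pos: "\<And>w. w \<in> set_pmf M \<Longrightarrow> safe_prb M L Y w > 0"
  shows "susp M L Y = ereal (\<integral>w. - log 2 (safe_prb M L Y w) \<partial>measure_pmf M)"
proof -
  let ?q = "\<lambda>y. cprb M (\<lambda>w. L w = 0) (\<lambda>w. Y w = y)"
  have "ereal (prb M (\<lambda>w. Y w = y)) * susp_at M L Y y = ereal (prb M (\<lambda>w. Y w = y) * - log 2 (?q y))"
    if "y \<in> Y ` set_pmf M" for y
  proof -
    from that obtain w where "w \<in> set_pmf M" "y = Y w" by auto
    with pos have "?q y > 0" by (simp add: safe_prb_def)
    then show ?thesis by (simp add: susp_at_def)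
  qed
  then have "susp M L Y = (\<Sum>y\<in>Y ` set_pmf M. ereal (prb M (\<lambda>w. Y w = y) * - log 2 (?q y)))"
    unfolding susp_def by (rule sum.cong[OF refl])
  also have "\<dots> = ereal (\<Sum>y\<in>Y ` set_pmf M. prb M (\<lambda>w. Y w = y) * - log 2 (?q y))"
    by simp
  also have "\<dots> = ereal (\<integral>w. - log 2 (?q (Y w)) \<partial>measure_pmf M)"
    by (simp only: expectation_finite_range[OF fin, where g="\<lambda>y. - log 2 (?q y)"])
  finally show ?thesis by (simp only: safe_prb_def)
qed

lemma susp_infinite:
  assumes fin: "finite (Y ` set_pmf M)"
    and w: "w \<in> set_pmf M" and zero: "safe_prb M L Y w = 0"
  shows "susp M L Y = \<infinity>"
proof -
  let ?term = "\<lambda>y. ereal (prb M (\<lambda>v. Y v = y)) * susp_at M L Y y"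
  have "?term (Y w) = \<infinity>"
    using zero atom_prb_pos[OF w] by (simp add: susp_at_def safe_prb_def atom_prb_def)
  moreover have "(\<Sum>y\<in>Y ` set_pmf M - {Y w}. ?term y) \<ge> 0"
    by (intro sum_nonneg) (simp add: prb_nonneg susp_at_nonneg)
  moreover have "susp M L Y = ?term (Y w) + (\<Sum>y\<in>Y ` set_pmf M - {Y w}. ?term y)"
    unfolding susp_def using w by (intro sum.remove[OF fin]) auto
  ultimately show ?thesis by simp
qed

lemma product_rule_of_cond_indep:
  assumes "cprb M (\<lambda>w. P w \<and> Q w) C = cprb M P C * cprb M Q C"
  shows "prb M (\<lambda>w. (P w \<and> Q w) \<and> C w) * prb M C = prb M (\<lambda>w. P w \<and> C w) * prb M (\<lambda>w. Q w \<and> C w)"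
proof (cases "prb M C = 0")
  case True
  have "prb M (\<lambda>w. P w \<and> C w) \<le> prb M C" by (rule prb_mono) auto
  then show ?thesis using True prb_nonneg[of M "\<lambda>w. P w \<and> C w"] by simp
next
  case False
  then show ?thesis using assms by (simp add: cprb_def field_simps power2_eq_square)
qed

lemma log_ratio_identity:
  fixes pxyz pz pxz pyz qxyz qz qxz qyz :: real
  assumes "pxyz > 0" "pz > 0" "pxz > 0" "pyz > 0" "qxyz > 0" "qz > 0" "qxz > 0" "qyz > 0"
    and prod: "qxyz * qz = qxz * qyz"
  shows "log 2 (pxyz * pz / (pxz * pyz))
       = - log 2 (qxyz / pxyz) + log 2 (qxz / pxz) + log 2 ((qyz / pyz) / (qz / pz))"
proof -
  have "log 2 (pxyz * pz / (pxz * pyz)) = log 2 ((pxyz / qxyz) * (qxz / pxz) * ((qyz / pyz) / (qz / pz)))"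
    using assms by (simp add: field_simps)
  also have "\<dots> = log 2 (pxyz / qxyz) + log 2 (qxz / pxz) + log 2 ((qyz / pyz) / (qz / pz))"
  proof -
    have "pxyz / qxyz > 0" "qxz / pxz > 0" "(qyz / pyz) / (qz / pz) > 0" using assms by simp_all
    then show ?thesis by (simp only: log_mult_pos mult_pos_pos)
  qed
  also have "log 2 (pxyz / qxyz) = - log 2 (qxyz / pxyz)"
    using assms by (simp add: log_divide_pos)
  finally show ?thesis .
qed

lemma pointwise_chain_rule:
  assumes w: "w \<in> set_pmf M"
    and safe3: "safe_prb M L (\<lambda>v. (X v, (Z v, Y v))) w > 0"
    and indep: "cprb M (\<lambda>v. X v = X w \<and> Y v = Y w) (\<lambda>v. Z v = Z w \<and> L v = 0) =
                cprb M (\<lambda>v. X v = X w) (\<lambda>v. Z v = Z w \<and> L v = 0) *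
                cprb M (\<lambda>v. Y v = Y w) (\<lambda>v. Z v = Z w \<and> L v = 0)"
  shows "log 2 (atom_prb M (\<lambda>v. (X v, Y v, Z v)) w * atom_prb M Z w /
                (atom_prb M (\<lambda>v. (X v, Z v)) w * atom_prb M (\<lambda>v. (Y v, Z v)) w))
       = - log 2 (safe_prb M L (\<lambda>v. (X v, (Z v, Y v))) w) + log 2 (safe_prb M L (\<lambda>v. (X v, Z v)) w)
         + log 2 (safe_prb M L (\<lambda>v. (Z v, Y v)) w / safe_prb M L Z w)"
proof -
  define pxyz where "pxyz = atom_prb M (\<lambda>v. (X v, Y v, Z v)) w"
  define pz where "pz = atom_prb M Z w"
  define pxz where "pxz = atom_prb M (\<lambda>v. (X v, Z v)) w"
  define pyz where "pyz = atom_prb M (\<lambda>v. (Y v, Z v)) w"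
  define qxyz where "qxyz = prb M (\<lambda>v. L v = 0 \<and> (X v, Z v, Y v) = (X w, Z w, Y w))"
  define qz where "qz = prb M (\<lambda>v. L v = 0 \<and> Z v = Z w)"
  define qxz where "qxz = prb M (\<lambda>v. L v = 0 \<and> (X v, Z v) = (X w, Z w))"
  define qyz where "qyz = prb M (\<lambda>v. L v = 0 \<and> (Z v, Y v) = (Z w, Y w))"
  have p_pos: "pxyz > 0" "pz > 0" "pxz > 0" "pyz > 0"
    unfolding pxyz_def pz_def pxz_def pyz_def using w by (simp_all add: atom_prb_pos)
  have safe3_eq: "safe_prb M L (\<lambda>v. (X v, (Z v, Y v))) w = qxyz / pxyz"
    unfolding safe_prb_eq qxyz_def pxyz_def atom_prb_def by (simp add: conj_commute)
  have safe2_eq: "safe_prb M L (\<lambda>v. (X v, Z v)) w = qxz / pxz"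
    unfolding safe_prb_eq qxz_def pxz_def ..
  have safeYZ_eq: "safe_prb M L (\<lambda>v. (Z v, Y v)) w = qyz / pyz"
    unfolding safe_prb_eq qyz_def pyz_def atom_prb_def by (simp add: conj_commute)
  have safeZ_eq: "safe_prb M L Z w = qz / pz"
    unfolding safe_prb_eq qz_def pz_def ..
  have "qxyz > 0" using safe3 p_pos by (simp add: safe3_eq zero_less_divide_iff)
  moreover have "qxz > 0"
    using safe_prb_pos_coarsen[OF w _ safe3, of "\<lambda>v. (X v, Z v)"] p_pos
    by (simp add: safe2_eq zero_less_divide_iff)
  moreover have "qxyz \<le> qyz" "qxz \<le> qz"
    unfolding qxyz_def qyz_def qxz_def qz_def by (auto intro: prb_mono)
  ultimately have q_pos: "qxyz > 0" "qz > 0" "qxz > 0" "qyz > 0" by linarith+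
  have "qxyz * qz = qxz * qyz"
    using product_rule_of_cond_indep[OF indep]
    unfolding qxyz_def qz_def qxz_def qyz_def by (simp add: conj_commute conj_left_commute)
  from log_ratio_identity[OF p_pos q_pos this]
  show ?thesis
    unfolding safe3_eq safe2_eq safeYZ_eq safeZ_eq pxyz_def pz_def pxz_def pyz_def .
qed

text \<open>That ratio has expectation 1, by the tower property applied once to (Z, Y) and
  once to Z.\<close>

lemma expectation_safe_ratio:
  assumes fin: "finite (Z ` set_pmf M)" "finite (Y ` set_pmf M)"
    and pos: "\<And>w. w \<in> set_pmf M \<Longrightarrow> safe_prb M L Z w > 0"
  shows "(\<integral>w. safe_prb M L (\<lambda>v. (Z v, Y v)) w / safe_prb M L Z w \<partial>measure_pmf M) = 1"
proof -
  let ?A = "\<lambda>w. L w = 0"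
  let ?g = "\<lambda>z. 1 / cprb M ?A (\<lambda>v. Z v = z)"
  have finZY: "finite ((\<lambda>w. (Z w, Y w)) ` set_pmf M)"
    using fin by (rule finite_range_pair)
  have "(\<integral>w. safe_prb M L (\<lambda>v. (Z v, Y v)) w / safe_prb M L Z w \<partial>measure_pmf M)
      = (\<integral>w. cprb M ?A (\<lambda>v. (Z v, Y v) = (Z w, Y w)) * (\<lambda>(z, y). ?g z) (Z w, Y w) \<partial>measure_pmf M)"
    by (simp add: safe_prb_def)
  also have "\<dots> = (\<integral>w. (if ?A w then (\<lambda>(z, y). ?g z) (Z w, Y w) else 0) \<partial>measure_pmf M)"
    by (rule expectation_cprb_tower[OF finZY])
  also have "\<dots> = (\<integral>w. (if ?A w then ?g (Z w) else 0) \<partial>measure_pmf M)"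
    by (simp only: prod.case)
  also have "\<dots> = (\<integral>w. cprb M ?A (\<lambda>v. Z v = Z w) * ?g (Z w) \<partial>measure_pmf M)"
    by (rule expectation_cprb_tower[OF fin(1), symmetric])
  also have "\<dots> = (\<integral>w. 1 \<partial>measure_pmf M)"
    by (intro integral_cong_AE) (auto intro!: AE_pmfI simp: safe_prb_def dest: pos)
  finally show ?thesis by simp
qed

lemma expectation_log_safe_ratio_nonpos:
  assumes finZ: "finite (Z ` set_pmf M)" and finY: "finite (Y ` set_pmf M)"
    and pos: "\<And>w. w \<in> set_pmf M \<Longrightarrow> safe_prb M L (\<lambda>v. (Z v, Y v)) w > 0"
  shows "(\<integral>w. log 2 (safe_prb M L (\<lambda>v. (Z v, Y v)) w / safe_prb M L Z w) \<partial>measure_pmf M) \<le> 0"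
proof -
  define r where "r w = safe_prb M L (\<lambda>v. (Z v, Y v)) w / safe_prb M L Z w" for w
  have posZ: "safe_prb M L Z w > 0" if "w \<in> set_pmf M" for w
    using safe_prb_pos_coarsen[OF that _ pos[OF that], where Z=Z] by simp
  have finZY: "finite ((\<lambda>w. (Z w, Y w)) ` set_pmf M)"
    using finZ finY by (rule finite_range_pair)
  have int_r: "integrable (measure_pmf M) r"
    and int_log_r: "integrable (measure_pmf M) (\<lambda>w. log 2 (r w))"
    by (rule integrable_factoring[OF finZY], simp add: safe_prb_def r_def)+
  have "(\<integral>w. log 2 (r w) \<partial>measure_pmf M) \<le> ((\<integral>w. r w \<partial>measure_pmf M) - 1) / ln 2"
    using int_r int_log_r by (rule expectation_log_le) (simp add: r_def pos posZ)
  also have "(\<integral>w. r w \<partial>measure_pmf M) = 1"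
    unfolding r_def using finZ finY posZ by (rule expectation_safe_ratio)
  finally show ?thesis by (simp add: r_def)
qed

text \<open>The inequality in the case where all suspicions are finite, stated for real
  expectations: by the pointwise identity, I(X;Y|Z) equals the difference of the
  expected pointwise suspicions plus a term that is nonpositive by Gibbs.\<close>

lemma cond_mi_le_suspicion_increment:
  assumes finX: "finite (X ` set_pmf M)" and finY: "finite (Y ` set_pmf M)"
    and finZ: "finite (Z ` set_pmf M)"
    and safe3: "\<And>w. w \<in> set_pmf M \<Longrightarrow> safe_prb M L (\<lambda>v. (X v, (Z v, Y v))) w > 0"
    and indep: "\<And>w. w \<in> set_pmf M \<Longrightarrow>
       cprb M (\<lambda>v. X v = X w \<and> Y v = Y w) (\<lambda>v. Z v = Z w \<and> L v = 0) =
       cprb M (\<lambda>v. X v = X w) (\<lambda>v. Z v = Z w \<and> L v = 0) *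
       cprb M (\<lambda>v. Y v = Y w) (\<lambda>v. Z v = Z w \<and> L v = 0)"
  shows "cond_mi M X Y Z \<le> (\<integral>w. - log 2 (safe_prb M L (\<lambda>v. (X v, (Z v, Y v))) w) \<partial>measure_pmf M)
                           - (\<integral>w. - log 2 (safe_prb M L (\<lambda>v. (X v, Z v)) w) \<partial>measure_pmf M)"
proof -
  let ?s3 = "\<lambda>w. - log 2 (safe_prb M L (\<lambda>v. (X v, (Z v, Y v))) w)"
  let ?s2 = "\<lambda>w. - log 2 (safe_prb M L (\<lambda>v. (X v, Z v)) w)"
  let ?lr = "\<lambda>w. log 2 (safe_prb M L (\<lambda>v. (Z v, Y v)) w / safe_prb M L Z w)"
  have fin3: "finite ((\<lambda>w. (X w, (Z w, Y w))) ` set_pmf M)"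
    using finX finZ finY by (intro finite_range_pair)
  have int3: "integrable (measure_pmf M) ?s3" and int2: "integrable (measure_pmf M) ?s2"
    and int_lr: "integrable (measure_pmf M) ?lr"
    by (rule integrable_factoring[OF fin3], simp add: safe_prb_def)+
  have "cond_mi M X Y Z = (\<integral>w. ?s3 w - ?s2 w + ?lr w \<partial>measure_pmf M)"
    unfolding cond_mi_as_expectation[OF finX finY finZ]
    using pointwise_chain_rule[OF _ safe3 indep]
    by (intro integral_cong_AE AE_pmfI) simp_all
  also have "\<dots> = (\<integral>w. ?s3 w \<partial>measure_pmf M) - (\<integral>w. ?s2 w \<partial>measure_pmf M)
                  + (\<integral>w. ?lr w \<partial>measure_pmf M)"
    using int3 int2 int_lr by simp
  also have "(\<integral>w. ?lr w \<partial>measure_pmf M) \<le> 0"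
  proof (rule expectation_log_safe_ratio_nonpos[OF finZ finY])
    show "safe_prb M L (\<lambda>v. (Z v, Y v)) w > 0" if "w \<in> set_pmf M" for w
      using safe_prb_pos_coarsen[OF that _ safe3[OF that], where Z="\<lambda>v. (Z v, Y v)"] by simp
  qed
  finally show ?thesis by simp
qed

theorem corollary3p2:
  fixes M :: "'w pmf"
    and L :: "'w \<Rightarrow> nat"
    and X :: "'w \<Rightarrow> 'x"
    and T :: "'w \<Rightarrow> 't"
    and Tk :: "'w \<Rightarrow> 'm"
  assumes L01: "\<forall>w \<in> set_pmf M. L w \<in> {0, 1}"
    and finX: "finite (X ` set_pmf M)"
    and finT: "finite (T ` set_pmf M)"
    and finTk: "finite (Tk ` set_pmf M)"
    and indep: "\<forall>t. prb M (\<lambda>w. T w = t) > 0 \<longrightarrow>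
        (\<forall>x m. cprb M (\<lambda>w. X w = x \<and> Tk w = m) (\<lambda>w. T w = t \<and> L w = 0) =
               cprb M (\<lambda>w. X w = x) (\<lambda>w. T w = t \<and> L w = 0) *
               cprb M (\<lambda>w. Tk w = m) (\<lambda>w. T w = t \<and> L w = 0))"
    and pos: "\<forall>x t. prb M (\<lambda>w. X w = x \<and> T w = t) > 0 \<longrightarrow>
        cprb M (\<lambda>w. L w = 0) (\<lambda>w. X w = x \<and> T w = t) > 0"
  shows "ereal (cond_mi M X Tk T)
           \<le> susp M L (\<lambda>w. (X w, (T w, Tk w))) - susp M L (\<lambda>w. (X w, T w))"
proof -
  let ?Y3 = "\<lambda>w. (X w, (T w, Tk w))" and ?Y2 = "\<lambda>w. (X w, T w)"
  have fin3: "finite (?Y3 ` set_pmf M)" using finX finT finTk by (intro finite_range_pair)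
  have fin2: "finite (?Y2 ` set_pmf M)" using finX finT by (rule finite_range_pair)
  have safe2_pos: "safe_prb M L ?Y2 w > 0" if "w \<in> set_pmf M" for w
    using pos prb_pos[OF that, of "\<lambda>v. X v = X w \<and> T v = T w"] by (simp add: safe_prb_def)
  note susp2 = susp_as_expectation[OF fin2 safe2_pos]
  show ?thesis
  proof (cases "\<exists>w \<in> set_pmf M. safe_prb M L ?Y3 w = 0")
    case True
    then have "susp M L ?Y3 = \<infinity>" using susp_infinite[OF fin3] by blast
    then show ?thesis using susp2 by simp
  next
    case False
    have safe3_pos: "safe_prb M L ?Y3 w > 0" if "w \<in> set_pmf M" for w
      using False that cprb_nonneg[of M "\<lambda>v. L v = 0" "\<lambda>v. ?Y3 v = ?Y3 w"]
      by (auto simp: less_le safe_prb_def)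
    have "cond_mi M X Tk T \<le> (\<integral>w. - log 2 (safe_prb M L ?Y3 w) \<partial>measure_pmf M)
                              - (\<integral>w. - log 2 (safe_prb M L ?Y2 w) \<partial>measure_pmf M)"
    proof (rule cond_mi_le_suspicion_increment[OF finX finTk finT safe3_pos])
      show "cprb M (\<lambda>v. X v = X w \<and> Tk v = Tk w) (\<lambda>v. T v = T w \<and> L v = 0) =
            cprb M (\<lambda>v. X v = X w) (\<lambda>v. T v = T w \<and> L v = 0) *
            cprb M (\<lambda>v. Tk v = Tk w) (\<lambda>v. T v = T w \<and> L v = 0)" if "w \<in> set_pmf M" for w
        using indep prb_pos[OF that, of "\<lambda>v. T v = T w"] by blast
    qed
    then show ?thesis using susp2 susp_as_expectation[OF fin3 safe3_pos] by simp
  qed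
qed

end
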